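(* Under the setting of the context, if (TS1) holds and $u$ is the solution of problem (P), then $$\int_0^\infty u(x,t)\,\Delta t=\int_0^\infty u(0,t)\,\Delta t=\frac{A\mu_x}{k}\quad\text{for all }x\in\mu_x\mathbb{N}_0.$$
   Context: A time scale $\mathbb{T}$ is a nonempty closed subset of $\mathbb{R}$; here $\min\mathbb{T}=0$ and $\sup\mathbb{T}=+\infty$. $\sigma(t)=\inf\{s\in\mathbb{T}:s>t\}$ is the forward jump and $\mu_t(t)=\sigma(t)-t$ the graininess; $u^{\Delta_t}$ denotes the (Hilger) delta derivative in $t$ and $\int\cdot\,\Delta t$ the delta integral, with $\int_0^\infty=\lim_{T\to\infty}\int_0^T$. Fix $A>0$, $k>0$, $\mu_x>0$, $\Omega=\mu_x\mathbb{Z}\times\mathbb{T}$, $\mu_x\mathbb{N}_0=\{0,\mu_x,2\mu_x,\dots\}$. Problem (P): $u^{\Delta_t}(x,t)+k\frac{u(x,t)-u(x-\mu_x,t)}{\mu_x}=0$ for $(x,t)\in\Omega$, $u(0,0)=A$, $u(x,0)=0$ for $x\ne0$. A solution is $u:\Omega\to\mathbb{R}$ with each $u(x,\cdot)$ delta differentiable on $\mathbb{T}$, satisfying (P), and bounded on $\mu_x\mathbb{Z}\times(\mathbb{T}\cap[0,T_0])$ for every $T_0>0$. Condition (TS1): $1-\frac{k\mu_t(t)}{\mu_x}>0$ for all $t\in\mathbb{T}$. *)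

theory Defs
  imports "HOL-Analysis.Analysis"
begin

definition time_scale0 :: "real set \<Rightarrow> bool" where
  "time_scale0 TS \<longleftrightarrow> closed TS \<and> 0 \<in> TS \<and> (\<forall>t\<in>TS. 0 \<le> t) \<and> \<not> bdd_above TS"

definition sigma_ts :: "real set \<Rightarrow> real \<Rightarrow> real" where
  "sigma_ts TS t = Inf {s \<in> TS. s > t}"

definition graininess :: "real set \<Rightarrow> real \<Rightarrow> real" where
  "graininess TS t = sigma_ts TS t - t"

definition has_delta_derivative :: "real set \<Rightarrow> (real \<Rightarrow> real) \<Rightarrow> real \<Rightarrow> real \<Rightarrow> bool" where
  "has_delta_derivative TS f D t \<longleftrightarrow>
     (\<forall>\<epsilon>>0. \<exists>\<delta>>0. \<forall>s\<in>TS. \<bar>s - t\<bar> < \<delta> \<longrightarrow>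
        \<bar>(f (sigma_ts TS t) - f s) - D * (sigma_ts TS t - s)\<bar> \<le> \<epsilon> * \<bar>sigma_ts TS t - s\<bar>)"

definition delta_differentiable :: "real set \<Rightarrow> (real \<Rightarrow> real) \<Rightarrow> real \<Rightarrow> bool" where
  "delta_differentiable TS f t \<longleftrightarrow> (\<exists>D. has_delta_derivative TS f D t)"

text \<open>Antiderivative (for a time scale without maximum, T^kappa = T) and the
  delta (Cauchy) integral  int_a^b f Delta t = F b - F a  (Bohner--Peterson, Def. 1.71).\<close>
definition delta_antiderivative :: "real set \<Rightarrow> (real \<Rightarrow> real) \<Rightarrow> (real \<Rightarrow> real) \<Rightarrow> bool" where
  "delta_antiderivative TS f F \<longleftrightarrow> (\<forall>t\<in>TS. has_delta_derivative TS F (f t) t)"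

definition delta_integral :: "real set \<Rightarrow> (real \<Rightarrow> real) \<Rightarrow> real \<Rightarrow> real \<Rightarrow> real" where
  "delta_integral TS f a b = (SOME I. \<exists>F. delta_antiderivative TS f F \<and> I = F b - F a)"

definition delta_improper_integral_eq :: "real set \<Rightarrow> (real \<Rightarrow> real) \<Rightarrow> real \<Rightarrow> bool" where
  "delta_improper_integral_eq TS f L \<longleftrightarrow>
     ((\<lambda>b. delta_integral TS f 0 b) \<longlongrightarrow> L) (inf at_top (principal TS))"

definition solves_P :: "real set \<Rightarrow> real \<Rightarrow> real \<Rightarrow> real \<Rightarrow> (real \<Rightarrow> real \<Rightarrow> real) \<Rightarrow> bool" where
  "solves_P TS A k mux u \<longleftrightarrow>
     (\<forall>n::int. \<forall>t\<in>TS. has_delta_derivative TS (\<lambda>s. u (of_int n * mux) s)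
         (- k * (u (of_int n * mux) t - u (of_int n * mux - mux) t) / mux) t)
   \<and> u 0 0 = A
   \<and> (\<forall>n::int. n \<noteq> 0 \<longrightarrow> u (of_int n * mux) 0 = 0)
   \<and> (\<forall>T0>0. \<exists>B. \<forall>n::int. \<forall>t\<in>TS. t \<le> T0 \<longrightarrow> \<bar>u (of_int n * mux) t\<bar> \<le> B)"

end

theory Submission
  imports Defs
begin

(* Write u_n(t) = u(n mux, t), so that (P) is the upwind scheme u_n' = -(k/mux) (u_n - u_(n-1)).
   On a short interval after a point where all sites n < 0 vanish, the derivative bound
   and the uniform bound on u show that the supremum of |u_n| over the negative sites is at
   most half of itself, so those sites vanish identically. At a right-scattered point,
   (TS1) makes u_n(sigma t) a convex combination of u_n(t) and u_(n-1)(t); hence every u_n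
   is nonnegative. The partial mass P_n = u_0 + ... + u_(n-1) then satisfies
   P_(n+1)' = -(k/mux) u_n and P_(n+1)(0) = A, so the integral of u_n over [0, T] equals
   (mux/k) (A - P_(n+1)(T)). Finally P_n -> 0 by induction on n: P_(n+1) is nonincreasing,
   and if it stayed above e while P_n -> 0, then u_n >= e/2 eventually and P_(n+1) would
   decrease linearly below 0. *)

lemma time_scale0D:
  assumes "time_scale0 TS"
  shows "closed TS" "0 \<in> TS" "\<And>t. t \<in> TS \<Longrightarrow> 0 \<le> t" "\<not> bdd_above TS"
  using assms unfolding time_scale0_def by auto

lemma time_scale0_exists_gt:
  assumes "time_scale0 TS"
  obtains s where "s \<in> TS" "x < s"
  using time_scale0D(4)[OF assms] unfolding bdd_above_def by (meson not_le)

lemma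
  assumes "time_scale0 TS"
  shows sigma_ts_nonempty: "{s \<in> TS. t < s} \<noteq> {}"
    and sigma_ts_bdd_below: "bdd_below {s \<in> TS. t < s}"
  using time_scale0_exists_gt[OF assms, of t] by (auto intro: bdd_belowI[of _ t])

lemma sigma_ts_ge:
  assumes "time_scale0 TS"
  shows "t \<le> sigma_ts TS t"
  unfolding sigma_ts_def using sigma_ts_nonempty[OF assms] by (auto intro!: cInf_greatest)

lemma graininess_nonneg:
  assumes "time_scale0 TS"
  shows "0 \<le> graininess TS t"
  using sigma_ts_ge[OF assms] unfolding graininess_def by simp

lemma sigma_ts_le:
  assumes "time_scale0 TS" "s \<in> TS" "t < s"
  shows "sigma_ts TS t \<le> s"
  unfolding sigma_ts_def using assms sigma_ts_bdd_below[OF assms(1)] by (auto intro: cInf_lower)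

lemma sigma_ts_less_imp_between:
  assumes "time_scale0 TS" "sigma_ts TS t < y"
  shows "\<exists>s\<in>TS. t < s \<and> s < y"
  using assms(2) cInf_less_iff[OF sigma_ts_nonempty[OF assms(1)] sigma_ts_bdd_below[OF assms(1)]]
  unfolding sigma_ts_def by blast

lemma sigma_ts_le_Inf:
  assumes "time_scale0 TS" "X \<subseteq> TS" "X \<noteq> {}" "\<And>x. x \<in> X \<Longrightarrow> m < x"
  shows "sigma_ts TS m \<le> Inf X"
  using assms sigma_ts_le[OF assms(1)] by (intro cInf_greatest) auto

definition left_dense :: "real set \<Rightarrow> real \<Rightarrow> bool" where
  "left_dense TS t \<longleftrightarrow> t islimpt {s \<in> TS. s < t}"

lemma left_dense_islimpt_segment:
  assumes "left_dense TS t" "a < t"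
  shows "t islimpt {s \<in> TS. a \<le> s \<and> s < t}"
  unfolding islimpt_approachable_real
proof (intro allI impI)
  fix e :: real assume "e > 0"
  then obtain s where "s \<in> TS" "s < t" "\<bar>s - t\<bar> < min e (t - a)"
    using assms unfolding left_dense_def islimpt_approachable_real
    by (metis (no_types, lifting) diff_gt_0_iff_gt min_less_iff_conj mem_Collect_eq)
  then show "\<exists>s\<in>{s \<in> TS. a \<le> s \<and> s < t}. s \<noteq> t \<and> \<bar>s - t\<bar> < e" by auto
qed

lemma left_scattered_eq_sigma_ts:
  assumes ts: "time_scale0 TS" and "a \<in> TS" "m \<in> TS" "a < m" and "\<not> left_dense TS m"
  obtains r where "r \<in> TS" "a \<le> r" "r < m" "sigma_ts TS r = m"
proof -
  obtain e where "e > 0" and gap: "\<And>s. s \<in> TS \<Longrightarrow> s < m \<Longrightarrow> s \<le> m - e"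
    using assms(5) unfolding left_dense_def islimpt_approachable_real
    by (smt (verit, best) mem_Collect_eq)
  define Y where "Y = {s \<in> TS. a \<le> s \<and> s < m}"
  have "a \<in> Y" "bdd_above Y" using assms by (auto simp: Y_def intro: bdd_aboveI[of _ m])
  then have Y: "Y \<noteq> {}" "bdd_above Y" by auto
  define r where "r = Sup Y"
  have "r \<in> TS"
    unfolding r_def by (rule closed_subset_contains_Sup[OF time_scale0D(1)[OF ts] _ Y]) (auto simp: Y_def)
  moreover have "a \<le> r" unfolding r_def using \<open>a \<in> Y\<close> Y by (intro cSup_upper)
  moreover have "r < m"
  proof -
    have "r \<le> m - e" unfolding r_def using gap by (intro cSup_least[OF Y(1)]) (auto simp: Y_def)
    then show ?thesis using \<open>e > 0\<close> by simp
  qed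
  moreover have "sigma_ts TS r = m"
  proof (rule ccontr)
    assume "sigma_ts TS r \<noteq> m"
    with sigma_ts_le[OF ts assms(3) \<open>r < m\<close>] have "sigma_ts TS r < m" by simp
    then obtain s where "s \<in> TS" "r < s" "s < m" using sigma_ts_less_imp_between[OF ts] by blast
    then have "s \<in> Y" using \<open>a \<le> r\<close> by (simp add: Y_def)
    then show False using \<open>r < s\<close> cSup_upper[OF _ Y(2)] unfolding r_def by fastforce
  qed
  ultimately show thesis using that by blast
qed

lemma has_delta_derivative_sigma:
  assumes "has_delta_derivative TS f D t" "t \<in> TS"
  shows "f (sigma_ts TS t) = f t + graininess TS t * D"
proof -
  let ?c = "\<bar>sigma_ts TS t - t\<bar>"
  have "\<bar>f (sigma_ts TS t) - f t - D * (sigma_ts TS t - t)\<bar> \<le> 0 + e" if "e > 0" for e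
  proof -
    have "e / (?c + 1) > 0" using \<open>e > 0\<close> by simp
    then have "\<bar>f (sigma_ts TS t) - f t - D * (sigma_ts TS t - t)\<bar> \<le> e / (?c + 1) * ?c"
      using assms unfolding has_delta_derivative_def by fastforce
    also have "\<dots> \<le> e" using \<open>e > 0\<close> by (simp add: field_simps)
    finally show ?thesis by simp
  qed
  then have "f (sigma_ts TS t) - f t - D * (sigma_ts TS t - t) = 0"
    by (metis abs_le_zero_iff field_le_epsilon)
  then show ?thesis unfolding graininess_def by (simp add: algebra_simps)
qed

lemma has_delta_derivative_right_dense:
  assumes "has_delta_derivative TS f D t" "sigma_ts TS t = t" "e > 0"
  shows "\<exists>d>0. \<forall>s\<in>TS. \<bar>s - t\<bar> < d \<longrightarrow> \<bar>f s - f t - D * (s - t)\<bar> \<le> e * \<bar>s - t\<bar>"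
proof -
  have "\<bar>f t - f s - D * (t - s)\<bar> = \<bar>f s - f t - D * (s - t)\<bar>" for s
    by (simp add: abs_minus_commute algebra_simps)
  then show ?thesis using assms unfolding has_delta_derivative_def by (metis abs_minus_commute)
qed

lemma has_delta_derivative_imp_continuous:
  assumes ts: "time_scale0 TS" and f: "has_delta_derivative TS f D t" and "t \<in> TS"
  shows "continuous (at t within TS) f"
  unfolding continuous_within_eps_delta dist_real_def
proof (intro allI impI)
  fix e :: real assume "e > 0"
  define \<mu> where "\<mu> = graininess TS t"
  have "\<mu> \<ge> 0" using graininess_nonneg[OF ts] unfolding \<mu>_def .
  define e1 where "e1 = e / (2 * (\<mu> + 1))"
  have "e1 > 0" unfolding e1_def using \<open>e > 0\<close> \<open>\<mu> \<ge> 0\<close> by simp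
  then obtain d1 where "d1 > 0" and d1: "\<And>s. s \<in> TS \<Longrightarrow> \<bar>s - t\<bar> < d1 \<Longrightarrow>
      \<bar>f (sigma_ts TS t) - f s - D * (sigma_ts TS t - s)\<bar> \<le> e1 * \<bar>sigma_ts TS t - s\<bar>"
    using f unfolding has_delta_derivative_def by blast
  have \<sigma>: "sigma_ts TS t = t + \<mu>" and f\<sigma>: "f (sigma_ts TS t) = f t + \<mu> * D"
    using has_delta_derivative_sigma[OF f \<open>t \<in> TS\<close>] unfolding \<mu>_def graininess_def by simp_all
  define d where "d = min d1 (min 1 (e / (2 * (\<bar>D\<bar> + 1))))"
  have "d > 0" unfolding d_def using \<open>d1 > 0\<close> \<open>e > 0\<close> by simp
  moreover have "\<bar>f s - f t\<bar> < e" if "s \<in> TS" "\<bar>s - t\<bar> < d" for s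
  proof -
    \<comment> \<open>Comparing the difference quotients from \<open>s\<close> and from \<open>t\<close> to \<open>\<sigma>(t)\<close>.\<close>
    have "\<bar>f t - f s + D * (s - t)\<bar> \<le> e1 * \<bar>\<mu> + t - s\<bar>"
      using d1[OF that(1)] that(2) \<sigma> f\<sigma> unfolding d_def by (simp add: algebra_simps)
    also have "\<dots> \<le> e1 * (\<mu> + 1)"
      using that(2) \<open>e1 > 0\<close> \<open>\<mu> \<ge> 0\<close> unfolding d_def by (intro mult_left_mono) auto
    also have "\<dots> = e / 2" unfolding e1_def using \<open>\<mu> \<ge> 0\<close> by (simp add: field_simps)
    finally have "\<bar>f t - f s + D * (s - t)\<bar> \<le> e / 2" .
    moreover have "\<bar>D * (s - t)\<bar> < e / 2"
    proof -
      have "\<bar>D\<bar> * \<bar>s - t\<bar> \<le> \<bar>D\<bar> * (e / (2 * (\<bar>D\<bar> + 1)))"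
        using that(2) unfolding d_def by (intro mult_left_mono) auto
      also have "\<dots> < e / 2" using \<open>e > 0\<close> by (simp add: field_simps)
      finally show ?thesis by (simp add: abs_mult)
    qed
    ultimately show ?thesis by linarith
  qed
  ultimately show "\<exists>d>0. \<forall>s\<in>TS. \<bar>s - t\<bar> < d \<longrightarrow> \<bar>f s - f t\<bar> < e" by blast
qed

lemma has_delta_derivative_const: "has_delta_derivative TS (\<lambda>x. b) 0 t"
  unfolding has_delta_derivative_def by (intro allI impI exI[of _ 1]) simp

lemma has_delta_derivative_add:
  assumes f: "has_delta_derivative TS f Df t" and g: "has_delta_derivative TS g Dg t"
  shows "has_delta_derivative TS (\<lambda>x. f x + g x) (Df + Dg) t"
  unfolding has_delta_derivative_def
proof (intro allI impI)
  fix e :: real assume "e > 0"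
  let ?\<sigma> = "sigma_ts TS t"
  obtain d1 where "d1 > 0" and d1: "\<And>s. s \<in> TS \<Longrightarrow> \<bar>s - t\<bar> < d1 \<Longrightarrow>
      \<bar>(f ?\<sigma> - f s) - Df * (?\<sigma> - s)\<bar> \<le> e / 2 * \<bar>?\<sigma> - s\<bar>"
    using f \<open>e > 0\<close> unfolding has_delta_derivative_def by (meson half_gt_zero)
  obtain d2 where "d2 > 0" and d2: "\<And>s. s \<in> TS \<Longrightarrow> \<bar>s - t\<bar> < d2 \<Longrightarrow>
      \<bar>(g ?\<sigma> - g s) - Dg * (?\<sigma> - s)\<bar> \<le> e / 2 * \<bar>?\<sigma> - s\<bar>"
    using g \<open>e > 0\<close> unfolding has_delta_derivative_def by (meson half_gt_zero)
  have "\<bar>f ?\<sigma> + g ?\<sigma> - (f s + g s) - (Df + Dg) * (?\<sigma> - s)\<bar> \<le> e * \<bar>?\<sigma> - s\<bar>"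
    if "s \<in> TS" "\<bar>s - t\<bar> < min d1 d2" for s
    using d1[of s] d2[of s] that
      abs_triangle_ineq[of "(f ?\<sigma> - f s) - Df * (?\<sigma> - s)" "(g ?\<sigma> - g s) - Dg * (?\<sigma> - s)"]
    by (simp add: algebra_simps)
  moreover have "min d1 d2 > 0" using \<open>d1 > 0\<close> \<open>d2 > 0\<close> by simp
  ultimately show "\<exists>d>0. \<forall>s\<in>TS. \<bar>s - t\<bar> < d \<longrightarrow>
      \<bar>f ?\<sigma> + g ?\<sigma> - (f s + g s) - (Df + Dg) * (?\<sigma> - s)\<bar> \<le> e * \<bar>?\<sigma> - s\<bar>"
    by blast
qed

lemma has_delta_derivative_cmult:
  assumes f: "has_delta_derivative TS f D t"
  shows "has_delta_derivative TS (\<lambda>x. c * f x) (c * D) t"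
  unfolding has_delta_derivative_def
proof (intro allI impI)
  fix e :: real assume "e > 0"
  let ?\<sigma> = "sigma_ts TS t"
  show "\<exists>d>0. \<forall>s\<in>TS. \<bar>s - t\<bar> < d \<longrightarrow>
      \<bar>c * f ?\<sigma> - c * f s - c * D * (?\<sigma> - s)\<bar> \<le> e * \<bar>?\<sigma> - s\<bar>"
  proof (cases "c = 0")
    case True
    then show ?thesis using \<open>e > 0\<close> by (intro exI[of _ 1]) simp
  next
    case False
    then have "e / \<bar>c\<bar> > 0" using \<open>e > 0\<close> by simp
    then obtain d where "d > 0" and d: "\<And>s. s \<in> TS \<Longrightarrow> \<bar>s - t\<bar> < d \<Longrightarrow>
        \<bar>(f ?\<sigma> - f s) - D * (?\<sigma> - s)\<bar> \<le> e / \<bar>c\<bar> * \<bar>?\<sigma> - s\<bar>"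
      using f unfolding has_delta_derivative_def by blast
    have "\<bar>c * f ?\<sigma> - c * f s - c * D * (?\<sigma> - s)\<bar> \<le> e * \<bar>?\<sigma> - s\<bar>"
      if "s \<in> TS" "\<bar>s - t\<bar> < d" for s
    proof -
      have "\<bar>c * f ?\<sigma> - c * f s - c * D * (?\<sigma> - s)\<bar> = \<bar>c\<bar> * \<bar>(f ?\<sigma> - f s) - D * (?\<sigma> - s)\<bar>"
        by (simp add: abs_mult[symmetric] algebra_simps)
      also have "\<dots> \<le> \<bar>c\<bar> * (e / \<bar>c\<bar> * \<bar>?\<sigma> - s\<bar>)" using d[OF that] by (intro mult_left_mono) auto
      finally show ?thesis using False by simp
    qed
    then show ?thesis using \<open>d > 0\<close> by blast
  qed
qed

lemma has_delta_derivative_diff: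
  assumes "has_delta_derivative TS f Df t" "has_delta_derivative TS g Dg t"
  shows "has_delta_derivative TS (\<lambda>x. f x - g x) (Df - Dg) t"
  using has_delta_derivative_add[OF assms(1) has_delta_derivative_cmult[OF assms(2), of "-1"]] by simp

lemma has_delta_derivative_sum:
  assumes "finite I" "\<And>i. i \<in> I \<Longrightarrow> has_delta_derivative TS (f i) (D i) t"
  shows "has_delta_derivative TS (\<lambda>x. \<Sum>i\<in>I. f i x) (\<Sum>i\<in>I. D i) t"
  using assms
  by (induction I rule: finite_induct) (auto intro: has_delta_derivative_add has_delta_derivative_const[simplified])

lemma time_scale_induct:
  assumes ts: "time_scale0 TS" and "a \<in> TS" and base: "P a"
    and right_scattered: "\<And>t. t \<in> TS \<Longrightarrow> a \<le> t \<Longrightarrow> t < b \<Longrightarrow> t < sigma_ts TS t \<Longrightarrow> P t \<Longrightarrow>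
      P (sigma_ts TS t)"
    and right_dense: "\<And>t. t \<in> TS \<Longrightarrow> a \<le> t \<Longrightarrow> t < b \<Longrightarrow> sigma_ts TS t = t \<Longrightarrow> P t \<Longrightarrow>
      \<exists>e>0. \<forall>s\<in>TS. t < s \<longrightarrow> s < t + e \<longrightarrow> P s"
    and left_dense: "\<And>t. t \<in> TS \<Longrightarrow> a < t \<Longrightarrow> t \<le> b \<Longrightarrow> left_dense TS t \<Longrightarrow>
      (\<forall>s\<in>TS. a \<le> s \<longrightarrow> s < t \<longrightarrow> P s) \<Longrightarrow> P t"
    and "t \<in> TS" "a \<le> t" "t \<le> b"
  shows "P t"
proof (rule ccontr)
  assume "\<not> P t"
  \<comment> \<open>Derive a contradiction at the infimum of the counterexamples.\<close>
  define X where "X = {x \<in> TS. a \<le> x \<and> x \<le> b \<and> \<not> P x}"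
  have "t \<in> X" using assms \<open>\<not> P t\<close> by (simp add: X_def)
  have X: "X \<noteq> {}" "bdd_below X" using \<open>t \<in> X\<close> by (auto simp: X_def intro: bdd_belowI[of _ a])
  define m where "m = Inf X"
  have "m \<in> TS"
    unfolding m_def by (rule closed_subset_contains_Inf[OF time_scale0D(1)[OF ts] _ X]) (auto simp: X_def)
  have m_le: "m \<le> x" if "x \<in> X" for x unfolding m_def using that X(2) by (rule cInf_lower)
  have "a \<le> m" unfolding m_def by (rule cInf_greatest[OF X(1)]) (simp add: X_def)
  have "m \<le> b" using m_le[OF \<open>t \<in> X\<close>] assms by simp
  have below: "\<forall>s\<in>TS. a \<le> s \<longrightarrow> s < m \<longrightarrow> P s"
    using m_le \<open>m \<le> b\<close> by (force simp: X_def)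
  have "P m"
  proof (cases "m = a")
    case False
    with \<open>a \<le> m\<close> have "a < m" by simp
    show ?thesis
    proof (cases "left_dense TS m")
      case False
      then obtain r where "r \<in> TS" "a \<le> r" "r < m" "sigma_ts TS r = m"
        using left_scattered_eq_sigma_ts[OF ts \<open>a \<in> TS\<close> \<open>m \<in> TS\<close> \<open>a < m\<close>] by blast
      then show ?thesis using right_scattered[of r] below \<open>m \<le> b\<close> by auto
    qed (use left_dense \<open>m \<in> TS\<close> \<open>a < m\<close> \<open>m \<le> b\<close> below in auto)
  qed (use base in simp)
  then have m_less: "m < x" if "x \<in> X" for x using m_le[OF that] that by (cases "x = m") (auto simp: X_def)
  then have "m < b" using \<open>t \<in> X\<close> assms by force
  show False
  proof (cases "m < sigma_ts TS m")
    case True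
    have "sigma_ts TS m \<le> m"
      unfolding m_def by (rule sigma_ts_le_Inf[OF ts _ X(1)]) (use m_less in \<open>auto simp: X_def m_def\<close>)
    then show False using True by simp
  next
    case False
    then have "sigma_ts TS m = m" using sigma_ts_ge[OF ts, of m] by simp
    then obtain e where "e > 0" and e: "\<forall>s\<in>TS. m < s \<longrightarrow> s < m + e \<longrightarrow> P s"
      using right_dense[OF \<open>m \<in> TS\<close> \<open>a \<le> m\<close> \<open>m < b\<close>] \<open>P m\<close> by blast
    have "m + e \<le> m" unfolding m_def
      using m_less e by (intro cInf_greatest[OF X(1)]) (force simp: X_def m_def)
    then show False using \<open>e > 0\<close> by simp
  qed
qed

lemma le_at_left_dense:
  fixes f g :: "real \<Rightarrow> real"
  assumes "continuous (at t within TS) f" "continuous (at t within TS) g"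
    and "left_dense TS t" "a < t"
    and "\<And>s. s \<in> TS \<Longrightarrow> a \<le> s \<Longrightarrow> s < t \<Longrightarrow> f s \<le> g s"
  shows "f t \<le> g t"
proof -
  let ?F = "at t within {s \<in> TS. a \<le> s \<and> s < t}"
  have "\<not> trivial_limit ?F"
    using left_dense_islimpt_segment[OF assms(3,4)] by (simp add: trivial_limit_within)
  moreover have "(f \<longlongrightarrow> f t) ?F" "(g \<longlongrightarrow> g t) ?F"
    using assms(1,2) unfolding continuous_within by (auto elim: tendsto_within_subset)
  moreover have "\<forall>\<^sub>F s in ?F. f s \<le> g s"
    using assms(5) by (auto simp: eventually_at_filter)
  ultimately show ?thesis by (intro tendsto_le[of ?F g "g t" f "f t"])
qed

lemma delta_derivative_le_imp_le_eps:
  assumes ts: "time_scale0 TS" and "a \<in> TS" "b \<in> TS" "a \<le> b" "\<epsilon> > 0"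
    and F': "\<And>t. t \<in> TS \<Longrightarrow> a \<le> t \<Longrightarrow> t \<le> b \<Longrightarrow> has_delta_derivative TS F (F' t) t"
    and bound: "\<And>t. t \<in> TS \<Longrightarrow> a \<le> t \<Longrightarrow> t \<le> b \<Longrightarrow> F' t \<le> C"
  shows "F b \<le> F a + (C + \<epsilon>) * (b - a)"
proof (rule time_scale_induct[where P = "\<lambda>x. F x \<le> F a + (C + \<epsilon>) * (x - a)" and b = b, OF ts \<open>a \<in> TS\<close>])
  fix x assume x: "x \<in> TS" "a \<le> x" "x < b" "x < sigma_ts TS x"
    and IH: "F x \<le> F a + (C + \<epsilon>) * (x - a)"
  have "F (sigma_ts TS x) = F x + graininess TS x * F' x"
    using has_delta_derivative_sigma[OF F' x(1)] x by simp
  also have "\<dots> \<le> F x + graininess TS x * (C + \<epsilon>)"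
    using bound[of x] x \<open>\<epsilon> > 0\<close> graininess_nonneg[OF ts] by (simp add: mult_left_mono)
  finally show "F (sigma_ts TS x) \<le> F a + (C + \<epsilon>) * (sigma_ts TS x - a)"
    using IH unfolding graininess_def by (simp add: algebra_simps)
next
  fix x assume x: "x \<in> TS" "a \<le> x" "x < b" "sigma_ts TS x = x"
    and IH: "F x \<le> F a + (C + \<epsilon>) * (x - a)"
  obtain d where "d > 0" and d: "\<forall>s\<in>TS. \<bar>s - x\<bar> < d \<longrightarrow>
      \<bar>F s - F x - F' x * (s - x)\<bar> \<le> \<epsilon> * \<bar>s - x\<bar>"
    using has_delta_derivative_right_dense[OF F' x(4) \<open>\<epsilon> > 0\<close>] x by auto
  have "F s \<le> F a + (C + \<epsilon>) * (s - a)" if "s \<in> TS" "x < s" "s < x + d" for s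
  proof -
    have "F s \<le> F x + (F' x + \<epsilon>) * (s - x)"
      using d that by (auto simp: abs_le_iff algebra_simps)
    also have "\<dots> \<le> F x + (C + \<epsilon>) * (s - x)"
      using bound[of x] x that by (intro add_left_mono mult_right_mono) auto
    finally show ?thesis using IH by (simp add: algebra_simps)
  qed
  then show "\<exists>e>0. \<forall>s\<in>TS. x < s \<longrightarrow> s < x + e \<longrightarrow> F s \<le> F a + (C + \<epsilon>) * (s - a)"
    using \<open>d > 0\<close> by blast
next
  fix x assume x: "x \<in> TS" "a < x" "x \<le> b" "left_dense TS x"
    and IH: "\<forall>s\<in>TS. a \<le> s \<longrightarrow> s < x \<longrightarrow> F s \<le> F a + (C + \<epsilon>) * (s - a)"
  show "F x \<le> F a + (C + \<epsilon>) * (x - a)"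
    using IH by (intro le_at_left_dense[OF has_delta_derivative_imp_continuous[OF ts F'] _ x(4,2)])
      (use x in \<open>auto intro!: continuous_intros\<close>)
qed (use assms in auto)

lemma delta_derivative_le_imp_le:
  assumes ts: "time_scale0 TS" and "a \<in> TS" "b \<in> TS" "a \<le> b"
    and F': "\<And>t. t \<in> TS \<Longrightarrow> a \<le> t \<Longrightarrow> t \<le> b \<Longrightarrow> has_delta_derivative TS F (F' t) t"
    and bound: "\<And>t. t \<in> TS \<Longrightarrow> a \<le> t \<Longrightarrow> t \<le> b \<Longrightarrow> F' t \<le> C"
  shows "F b \<le> F a + C * (b - a)"
proof (rule field_le_epsilon)
  fix e :: real assume "e > 0"
  then have "F b \<le> F a + (C + e / (b - a + 1)) * (b - a)"
    using \<open>a \<le> b\<close> by (intro delta_derivative_le_imp_le_eps[OF assms(1-4) _ F' bound]) simp_all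
  also have "\<dots> \<le> F a + C * (b - a) + e"
    using \<open>a \<le> b\<close> \<open>e > 0\<close> by (simp add: field_simps)
  finally show "F b \<le> F a + C * (b - a) + e" .
qed

lemma delta_derivative_bounded_imp_abs_le:
  assumes ts: "time_scale0 TS" and "a \<in> TS" "b \<in> TS" "a \<le> b"
    and F': "\<And>t. t \<in> TS \<Longrightarrow> a \<le> t \<Longrightarrow> t \<le> b \<Longrightarrow> has_delta_derivative TS F (F' t) t"
    and bound: "\<And>t. t \<in> TS \<Longrightarrow> a \<le> t \<Longrightarrow> t \<le> b \<Longrightarrow> \<bar>F' t\<bar> \<le> K"
  shows "\<bar>F b - F a\<bar> \<le> K * (b - a)"
proof -
  have "F b \<le> F a + K * (b - a)"
    using bound by (intro delta_derivative_le_imp_le[OF assms(1-4) F']) (auto simp: abs_le_iff)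
  moreover have "- F b \<le> - F a + K * (b - a)"
    using bound
    by (intro delta_derivative_le_imp_le[OF assms(1-4), where F' = "\<lambda>t. -1 * F' t"])
      (auto simp: abs_le_iff intro: has_delta_derivative_cmult[OF F', of _ "-1", simplified])
  ultimately show ?thesis by (simp add: abs_le_iff)
qed

lemma zero_delta_derivative_imp_eq:
  assumes ts: "time_scale0 TS" and F: "\<And>t. t \<in> TS \<Longrightarrow> has_delta_derivative TS F 0 t"
    and "a \<in> TS" "b \<in> TS"
  shows "F a = F b"
proof -
  have eq: "F x = F y" if "x \<in> TS" "y \<in> TS" "x \<le> y" for x y
  proof -
    have "\<bar>F y - F x\<bar> \<le> 0 * (y - x)"
      by (rule delta_derivative_bounded_imp_abs_le[OF ts that]) (use F in auto)
    then show ?thesis by simp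
  qed
  show ?thesis using eq assms(3,4) by (metis linorder_le_cases)
qed

lemma delta_integral_eq_antiderivative:
  assumes ts: "time_scale0 TS" and F: "delta_antiderivative TS f F" and "a \<in> TS" "b \<in> TS"
  shows "delta_integral TS f a b = F b - F a"
proof -
  have "\<exists>I. \<exists>F. delta_antiderivative TS f F \<and> I = F b - F a" using F by blast
  from someI_ex[OF this] obtain G
    where G: "delta_antiderivative TS f G" "delta_integral TS f a b = G b - G a"
    unfolding delta_integral_def by blast
  have "has_delta_derivative TS (\<lambda>x. F x - G x) 0 t" if "t \<in> TS" for t
    using has_delta_derivative_diff[of TS F "f t" t G "f t"] F G(1) that
    unfolding delta_antiderivative_def by simp
  then have "F a - G a = F b - G b"
    by (rule zero_delta_derivative_imp_eq[OF ts _ assms(3,4), of "\<lambda>x. F x - G x", simplified])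
  then show ?thesis using G(2) by simp
qed

lemma delta_derivative_pos_imp_le_right:
  assumes "has_delta_derivative TS f D x" "sigma_ts TS x = x" "D > 0"
  shows "\<exists>d>0. \<forall>s\<in>TS. x < s \<longrightarrow> s < x + d \<longrightarrow> f x \<le> f s"
proof -
  obtain d where "d > 0" and d: "\<forall>s\<in>TS. \<bar>s - x\<bar> < d \<longrightarrow> \<bar>f s - f x - D * (s - x)\<bar> \<le> D * \<bar>s - x\<bar>"
    using has_delta_derivative_right_dense[OF assms] by blast
  have "f x \<le> f s" if "s \<in> TS" "x < s" "s < x + d" for s
    using d that by (auto simp: abs_le_iff)
  then show ?thesis using \<open>d > 0\<close> by blast
qed

lemma relaxation_preserves_nonneg:
  assumes ts: "time_scale0 TS" and "c > 0"
    and stable: "\<And>t. t \<in> TS \<Longrightarrow> 0 \<le> 1 - c * graininess TS t"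
    and v': "\<And>t. t \<in> TS \<Longrightarrow> has_delta_derivative TS v (- c * (v t - w t)) t"
    and w: "\<And>t. t \<in> TS \<Longrightarrow> 0 \<le> w t"
    and "a \<in> TS" "0 \<le> v a" "b \<in> TS" "a \<le> b"
  shows "0 \<le> v b"
proof (rule field_le_epsilon)
  fix \<epsilon> :: real assume "\<epsilon> > 0"
  have "- \<epsilon> \<le> v b"
  proof (rule time_scale_induct[where P = "\<lambda>x. - \<epsilon> \<le> v x" and b = b, OF ts \<open>a \<in> TS\<close>])
    fix x assume x: "x \<in> TS" and IH: "- \<epsilon> \<le> v x"
    define \<mu> where "\<mu> = graininess TS x"
    have "0 \<le> c * \<mu>" using \<open>c > 0\<close> graininess_nonneg[OF ts] by (simp add: \<mu>_def)
    have "v (sigma_ts TS x) = (1 - c * \<mu>) * v x + c * \<mu> * w x"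
      using has_delta_derivative_sigma[OF v' x] x unfolding \<mu>_def by (simp add: algebra_simps)
    moreover have "(1 - c * \<mu>) * (- \<epsilon>) \<le> (1 - c * \<mu>) * v x"
      using mult_left_mono[OF IH stable[OF x]] unfolding \<mu>_def .
    moreover have "0 \<le> c * \<mu> * w x" using \<open>0 \<le> c * \<mu>\<close> w[OF x] by simp
    moreover have "0 \<le> c * \<mu> * \<epsilon>" using \<open>0 \<le> c * \<mu>\<close> \<open>\<epsilon> > 0\<close> by simp
    ultimately show "- \<epsilon> \<le> v (sigma_ts TS x)" by (simp add: algebra_simps)
  next
    fix x assume x: "x \<in> TS" "sigma_ts TS x = x" and IH: "- \<epsilon> \<le> v x"
    show "\<exists>e>0. \<forall>s\<in>TS. x < s \<longrightarrow> s < x + e \<longrightarrow> - \<epsilon> \<le> v s"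
    proof (cases "v x = - \<epsilon>")
      case True
      \<comment> \<open>At the level \<open>-\<epsilon>\<close> the derivative \<open>c (\<epsilon> + w x)\<close> is positive, so \<open>v\<close> cannot drop below it.\<close>
      have "- c * (v x - w x) > 0"
        using True \<open>c > 0\<close> \<open>\<epsilon> > 0\<close> w[OF x(1)] by (simp add: mult_pos_neg)
      then show ?thesis using delta_derivative_pos_imp_le_right[OF v'[OF x(1)] x(2)] True by auto
    next
      case False
      then have "v x + \<epsilon> > 0" using IH by simp
      then obtain d where "d > 0" "\<forall>s\<in>TS. \<bar>s - x\<bar> < d \<longrightarrow> \<bar>v s - v x\<bar> < v x + \<epsilon>"
        using has_delta_derivative_imp_continuous[OF ts v' x(1)] x(1)
        unfolding continuous_within_eps_delta dist_real_def by blast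
      then show ?thesis by (intro exI[of _ d]) auto
    qed
  next
    fix x assume x: "x \<in> TS" "a < x" "left_dense TS x"
      and IH: "\<forall>s\<in>TS. a \<le> s \<longrightarrow> s < x \<longrightarrow> - \<epsilon> \<le> v s"
    show "- \<epsilon> \<le> v x"
      using IH by (intro le_at_left_dense[OF continuous_const has_delta_derivative_imp_continuous[OF ts v'] x(3,2)])
        (use x in auto)
  qed (use assms \<open>\<epsilon> > 0\<close> in auto)
  then show "0 \<le> v b + \<epsilon>" by simp
qed

lemma delta_derivative_le_neg_imp_neg:
  assumes ts: "time_scale0 TS" and "r > 0" "t1 \<in> TS"
    and F': "\<And>t. t \<in> TS \<Longrightarrow> t1 \<le> t \<Longrightarrow> has_delta_derivative TS F (F' t) t"
    and bound: "\<And>t. t \<in> TS \<Longrightarrow> t1 \<le> t \<Longrightarrow> F' t \<le> - r"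
  obtains t where "t \<in> TS" "F t < 0"
proof -
  obtain t2 where "t2 \<in> TS" and t2: "t1 + \<bar>F t1\<bar> / r < t2"
    using time_scale0_exists_gt[OF ts] by blast
  moreover have "0 \<le> \<bar>F t1\<bar> / r" using \<open>r > 0\<close> by simp
  ultimately have "t1 \<le> t2" by simp
  have "F t2 \<le> F t1 + (- r) * (t2 - t1)"
    by (rule delta_derivative_le_imp_le[OF ts \<open>t1 \<in> TS\<close> \<open>t2 \<in> TS\<close> \<open>t1 \<le> t2\<close> F' bound])
  also have "\<dots> < 0" using t2 \<open>r > 0\<close> by (simp add: field_simps)
  finally show thesis using that \<open>t2 \<in> TS\<close> by blast
qed

lemma delta_derivative_neg_tendsto_zero:
  assumes ts: "time_scale0 TS" and "c > 0"
    and F': "\<And>t. t \<in> TS \<Longrightarrow> has_delta_derivative TS F (- c * w t) t"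
    and F_eq: "\<And>t. t \<in> TS \<Longrightarrow> F t = G t + w t"
    and G_nonneg: "\<And>t. t \<in> TS \<Longrightarrow> 0 \<le> G t" and w_nonneg: "\<And>t. t \<in> TS \<Longrightarrow> 0 \<le> w t"
    and G: "(G \<longlongrightarrow> 0) (inf at_top (principal TS))"
  shows "(F \<longlongrightarrow> 0) (inf at_top (principal TS))"
proof -
  have F_nonneg: "0 \<le> F t" if "t \<in> TS" for t
    using F_eq[OF that] G_nonneg[OF that] w_nonneg[OF that] by simp
  have F_antimono: "F t \<le> F s" if "s \<in> TS" "t \<in> TS" "s \<le> t" for s t
  proof -
    have "F t \<le> F s + 0 * (t - s)"
      by (rule delta_derivative_le_imp_le[OF ts that])
        (use F' w_nonneg \<open>c > 0\<close> in \<open>auto simp: zero_le_mult_iff\<close>)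
    then show ?thesis by simp
  qed
  have small: "\<exists>t\<in>TS. F t < e" if "e > 0" for e
  proof (rule ccontr)
    assume "\<not> ?thesis"
    then have F_ge: "e \<le> F t" if "t \<in> TS" for t using that by force
    \<comment> \<open>Once \<open>G < e/2\<close>, the remainder \<open>w > e/2\<close> forces \<open>F\<close> to decrease at a linear rate.\<close>
    have "\<forall>\<^sub>F t in inf at_top (principal TS). dist (G t) 0 < e / 2"
      using G \<open>e > 0\<close> unfolding tendsto_iff by (meson half_gt_zero)
    then obtain N where N: "\<And>t. N \<le> t \<Longrightarrow> t \<in> TS \<Longrightarrow> G t < e / 2"
      unfolding eventually_inf_principal eventually_at_top_linorder dist_real_def by force
    obtain t1 where "t1 \<in> TS" "N < t1" using time_scale0_exists_gt[OF ts] by blast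
    obtain t where "t \<in> TS" "F t < 0"
    proof (rule delta_derivative_le_neg_imp_neg[OF ts _ \<open>t1 \<in> TS\<close>])
      show "0 < c * (e / 2)" using \<open>c > 0\<close> \<open>e > 0\<close> by simp
      fix t assume "t \<in> TS" "t1 \<le> t"
      show "has_delta_derivative TS F (- c * w t) t" using \<open>t \<in> TS\<close> by (rule F')
      have "e / 2 \<le> w t"
        using F_ge[of t] F_eq[of t] N[of t] \<open>t \<in> TS\<close> \<open>t1 \<le> t\<close> \<open>N < t1\<close> by simp
      then show "- c * w t \<le> - (c * (e / 2))" using \<open>c > 0\<close> by simp
    qed
    then show False using F_ge \<open>e > 0\<close> by force
  qed
  show ?thesis
    unfolding tendsto_iff eventually_inf_principal eventually_at_top_linorder
  proof (intro allI impI)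
    fix e :: real assume "e > 0"
    then obtain t0 where "t0 \<in> TS" "F t0 < e" using small by blast
    then have "dist (F t) 0 < e" if "t0 \<le> t" "t \<in> TS" for t
      using F_antimono[OF \<open>t0 \<in> TS\<close> that(2,1)] F_nonneg[OF that(2)] by simp
    then show "\<exists>N. \<forall>t\<ge>N. t \<in> TS \<longrightarrow> dist (F t) 0 < e" by blast
  qed
qed

lemma bound_halving_imp_zero:
  fixes f :: "'a \<Rightarrow> real"
  assumes bounded: "\<exists>B. \<forall>x\<in>X. \<bar>f x\<bar> \<le> B"
    and halving: "\<And>B. \<forall>x\<in>X. \<bar>f x\<bar> \<le> B \<Longrightarrow> \<forall>x\<in>X. \<bar>f x\<bar> \<le> B / 2"
    and "x \<in> X"
  shows "f x = 0"
proof -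
  define M where "M = (SUP y\<in>X. \<bar>f y\<bar>)"
  have "bdd_above ((\<lambda>y. \<bar>f y\<bar>) ` X)" using bounded by (auto intro: bdd_aboveI2)
  then have "\<forall>y\<in>X. \<bar>f y\<bar> \<le> M" unfolding M_def by (auto intro: cSUP_upper)
  then have "\<forall>y\<in>X. \<bar>f y\<bar> \<le> M / 2" by (rule halving)
  then have "M \<le> M / 2" unfolding M_def using \<open>x \<in> X\<close> by (intro cSUP_least) auto
  moreover have "\<bar>f x\<bar> \<le> M / 2" using \<open>\<forall>y\<in>X. \<bar>f y\<bar> \<le> M / 2\<close> \<open>x \<in> X\<close> by blast
  ultimately show ?thesis by simp
qed

locale transport_solution =
  fixes TS :: "real set" and A k mux :: real and u :: "real \<Rightarrow> real \<Rightarrow> real"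
  assumes time_scale: "time_scale0 TS" and A_nonneg: "0 \<le> A" and k_pos: "0 < k" and mux_pos: "0 < mux"
    and graininess_bound: "\<forall>t\<in>TS. 0 \<le> 1 - k * graininess TS t / mux"
    and solves: "solves_P TS A k mux u"
begin

definition u_site :: "int \<Rightarrow> real \<Rightarrow> real" where
  "u_site n = u (of_int n * mux)"

lemma u_site_delta_derivative:
  assumes "t \<in> TS"
  shows "has_delta_derivative TS (u_site n) (- (k / mux) * (u_site n t - u_site (n - 1) t)) t"
proof -
  have shift: "of_int (n - 1) * mux = of_int n * mux - mux" by (simp add: algebra_simps)
  have "has_delta_derivative TS (u (of_int n * mux))
      (- k * (u (of_int n * mux) t - u (of_int n * mux - mux) t) / mux) t"
    using solves assms unfolding solves_P_def by blast
  moreover have "- k * X / mux = - (k / mux) * X" for X :: real by simp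
  ultimately show ?thesis unfolding u_site_def shift by (simp only:)
qed

lemma u_site_initial: "u_site n 0 = (if n = 0 then A else 0)"
  using solves unfolding solves_P_def u_site_def by auto

lemma u_site_bounded: "\<exists>B. \<forall>n. \<forall>t\<in>TS. t \<le> T \<longrightarrow> \<bar>u_site n t\<bar> \<le> B"
proof -
  obtain B where "\<forall>n::int. \<forall>t\<in>TS. t \<le> max T 1 \<longrightarrow> \<bar>u (of_int n * mux) t\<bar> \<le> B"
    using solves unfolding solves_P_def by (meson less_max_iff_disj zero_less_one)
  then show ?thesis unfolding u_site_def by (meson max.coboundedI1)
qed

lemma negative_sites_vanish_near:
  assumes "x \<in> TS" and zero_at_x: "\<And>n. n < 0 \<Longrightarrow> u_site n x = 0"
    and "n < 0" "s \<in> TS" "x \<le> s" "s \<le> x + mux / (4 * k)"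
  shows "u_site n s = 0"
proof -
  define h where "h = mux / (4 * k)"
  define X :: "(int \<times> real) set" where "X = {(m, y). m < 0 \<and> y \<in> TS \<and> x \<le> y \<and> y \<le> x + h}"
  have "(\<lambda>(m, y). u_site m y) (n, s) = 0"
  proof (rule bound_halving_imp_zero[where X = X])
    show "\<exists>B. \<forall>p\<in>X. \<bar>(\<lambda>(m, y). u_site m y) p\<bar> \<le> B"
      using u_site_bounded[of "x + h"] unfolding X_def by fastforce
  next
    fix B assume B: "\<forall>p\<in>X. \<bar>(\<lambda>(m, y). u_site m y) p\<bar> \<le> B"
    \<comment> \<open>On this short interval the slope is at most \<open>2kB/mux\<close>, so the sites grow at most to \<open>B/2\<close>.\<close>
    have "\<bar>u_site m y\<bar> \<le> B / 2" if "(m, y) \<in> X" for m y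
    proof -
      have "\<bar>u_site m y - u_site m x\<bar> \<le> (k / mux * (2 * B)) * (y - x)"
      proof (rule delta_derivative_bounded_imp_abs_le[OF time_scale \<open>x \<in> TS\<close>])
        fix z assume z: "z \<in> TS" "x \<le> z" "z \<le> y"
        show "has_delta_derivative TS (u_site m) (- (k / mux) * (u_site m z - u_site (m - 1) z)) z"
          using z(1) by (rule u_site_delta_derivative)
        have "(m, z) \<in> X" "(m - 1, z) \<in> X" using that z by (auto simp: X_def)
        then have "\<bar>u_site m z\<bar> \<le> B" "\<bar>u_site (m - 1) z\<bar> \<le> B" using B by fastforce+
        then have "\<bar>u_site m z - u_site (m - 1) z\<bar> \<le> 2 * B" by linarith
        then show "\<bar>- (k / mux) * (u_site m z - u_site (m - 1) z)\<bar> \<le> k / mux * (2 * B)"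
          using k_pos mux_pos by (simp add: abs_mult divide_right_mono mult_left_mono)
      qed (use that in \<open>auto simp: X_def\<close>)
      moreover have "u_site m x = 0" using that zero_at_x by (simp add: X_def)
      moreover have "(k / mux * (2 * B)) * (y - x) \<le> (k / mux * (2 * B)) * h"
      proof -
        have "\<bar>u_site m y\<bar> \<le> B" using B that by fastforce
        then have "0 \<le> B" using abs_ge_zero[of "u_site m y"] by linarith
        then show ?thesis using that k_pos mux_pos by (intro mult_left_mono) (auto simp: X_def)
      qed
      moreover have "(k / mux * (2 * B)) * h = B / 2"
        unfolding h_def using k_pos mux_pos by (simp add: field_simps)
      ultimately show ?thesis by simp
    qed
    then show "\<forall>p\<in>X. \<bar>(\<lambda>(m, y). u_site m y) p\<bar> \<le> B / 2" by auto
  qed (use assms in \<open>simp add: X_def h_def\<close>)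
  then show ?thesis by simp
qed

lemma negative_sites_vanish:
  assumes "n < 0" "t \<in> TS"
  shows "u_site n t = 0"
proof -
  have "\<forall>n<0. u_site n t = 0"
  proof (rule time_scale_induct[where P = "\<lambda>x. \<forall>n<0. u_site n x = 0" and a = 0 and b = t,
        OF time_scale time_scale0D(2)[OF time_scale]])
    fix x assume "x \<in> TS" and IH: "\<forall>n<0. u_site n x = 0"
    show "\<forall>n<0. u_site n (sigma_ts TS x) = 0"
      using has_delta_derivative_sigma[OF u_site_delta_derivative[OF \<open>x \<in> TS\<close>] \<open>x \<in> TS\<close>] IH by simp
  next
    fix x assume "x \<in> TS" and IH: "\<forall>n<0. u_site n x = 0"
    have "mux / (4 * k) > 0" using mux_pos k_pos by simp
    then show "\<exists>e>0. \<forall>s\<in>TS. x < s \<longrightarrow> s < x + e \<longrightarrow> (\<forall>n<0. u_site n s = 0)"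
      using negative_sites_vanish_near[OF \<open>x \<in> TS\<close>] IH by (meson less_eq_real_def)
  next
    fix x assume x: "x \<in> TS" "0 < x" "left_dense TS x"
      and IH: "\<forall>s\<in>TS. 0 \<le> s \<longrightarrow> s < x \<longrightarrow> (\<forall>n<0. u_site n s = 0)"
    show "\<forall>n<0. u_site n x = 0"
    proof (intro allI impI)
      fix n :: int assume "n < 0"
      have cont: "continuous (at x within TS) (u_site n)"
        using has_delta_derivative_imp_continuous[OF time_scale u_site_delta_derivative x(1)] x(1) .
      have "u_site n x \<le> 0"
        by (rule le_at_left_dense[OF cont continuous_const x(3,2)]) (use IH \<open>n < 0\<close> in auto)
      moreover have "0 \<le> u_site n x"
        by (rule le_at_left_dense[OF continuous_const cont x(3,2)]) (use IH \<open>n < 0\<close> in auto)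
      ultimately show "u_site n x = 0" by simp
    qed
  qed (use assms u_site_initial time_scale0D(3)[OF time_scale] in auto)
  then show ?thesis using assms by blast
qed

lemma u_site_nonneg:
  assumes "t \<in> TS"
  shows "0 \<le> u_site n t"
proof -
  have nonneg_below: "0 \<le> u_site n t" if "n < int m" "t \<in> TS" for n m t
    using that
  proof (induction m arbitrary: n t)
    case 0
    then show ?case using negative_sites_vanish by simp
  next
    case (Suc m)
    show ?case
    proof (cases "n < int m")
      case False
      with Suc.prems have "n = int m" by simp
      show ?thesis
      proof (rule relaxation_preserves_nonneg[OF time_scale _ _ u_site_delta_derivative])
        show "0 < k / mux" using k_pos mux_pos by simp
        show "0 \<le> 1 - k / mux * graininess TS s" if "s \<in> TS" for s
          using graininess_bound that by simp
        show "0 \<le> u_site (n - 1) s" if "s \<in> TS" for s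
          using Suc.IH \<open>n = int m\<close> that by simp
        show "0 \<le> u_site n 0" using u_site_initial A_nonneg by simp
      qed (use Suc.prems time_scale0D[OF time_scale] in auto)
    qed (use Suc in auto)
  qed
  show ?thesis using nonneg_below[of n "nat \<bar>n\<bar> + 1"] assms by simp
qed

definition partial_mass :: "nat \<Rightarrow> real \<Rightarrow> real" where
  "partial_mass n t = (\<Sum>j<n. u_site (int j) t)"

lemma partial_mass_delta_derivative:
  assumes "t \<in> TS"
  shows "has_delta_derivative TS (partial_mass (Suc n)) (- (k / mux) * u_site (int n) t) t"
proof -
  have deriv: "has_delta_derivative TS (partial_mass (Suc n))
      (\<Sum>j<Suc n. - (k / mux) * (u_site (int j) t - u_site (int j - 1) t)) t"
    unfolding partial_mass_def
    by (intro has_delta_derivative_sum u_site_delta_derivative assms) simp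
  have "(\<Sum>j<Suc n. u_site (int j) t - u_site (int j - 1) t)
      = (\<Sum>j<Suc n. u_site (int (Suc j) - 1) t - u_site (int j - 1) t)"
    by simp
  also have "\<dots> = u_site (int n) t"
    using sum_lessThan_telescope[of "\<lambda>j. u_site (int j - 1) t" "Suc n"]
      negative_sites_vanish[of "-1" t] assms by simp
  finally have "(\<Sum>j<Suc n. - (k / mux) * (u_site (int j) t - u_site (int j - 1) t))
      = - (k / mux) * u_site (int n) t"
    by (simp only: sum_distrib_left[symmetric])
  then show ?thesis using deriv by simp
qed

lemma partial_mass_initial: "partial_mass (Suc n) 0 = A"
  unfolding partial_mass_def u_site_initial by simp

lemma partial_mass_tendsto_zero: "(partial_mass n \<longlongrightarrow> 0) (inf at_top (principal TS))"
proof (induction n)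
  case 0
  then show ?case by (simp add: partial_mass_def)
next
  case (Suc n)
  show ?case
  proof (rule delta_derivative_neg_tendsto_zero[OF time_scale _ partial_mass_delta_derivative _ _ _ Suc.IH])
    show "0 < k / mux" using k_pos mux_pos by simp
  qed (auto simp: partial_mass_def intro!: sum_nonneg u_site_nonneg)
qed

lemma delta_integral_u_site:
  assumes "b \<in> TS"
  shows "delta_integral TS (u_site (int n)) 0 b = mux / k * (A - partial_mass (Suc n) b)"
proof -
  have "delta_antiderivative TS (u_site (int n)) (\<lambda>x. - (mux / k) * partial_mass (Suc n) x)"
    unfolding delta_antiderivative_def
  proof
    fix t assume "t \<in> TS"
    have "has_delta_derivative TS (\<lambda>x. - (mux / k) * partial_mass (Suc n) x)
        (- (mux / k) * (- (k / mux) * u_site (int n) t)) t"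
      by (rule has_delta_derivative_cmult[OF partial_mass_delta_derivative[OF \<open>t \<in> TS\<close>]])
    then show "has_delta_derivative TS (\<lambda>x. - (mux / k) * partial_mass (Suc n) x) (u_site (int n) t) t"
      using k_pos mux_pos by simp
  qed
  from delta_integral_eq_antiderivative[OF time_scale this time_scale0D(2)[OF time_scale] assms]
  show ?thesis by (simp add: partial_mass_initial algebra_simps)
qed

lemma improper_integral_u_site: "delta_improper_integral_eq TS (u_site (int n)) (A * mux / k)"
  unfolding delta_improper_integral_eq_def
proof (rule Lim_transform_eventually)
  have "((\<lambda>b. mux / k * (A - partial_mass (Suc n) b)) \<longlongrightarrow> mux / k * (A - 0))
      (inf at_top (principal TS))"
    by (intro tendsto_intros partial_mass_tendsto_zero)
  then show "((\<lambda>b. mux / k * (A - partial_mass (Suc n) b)) \<longlongrightarrow> A * mux / k)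
      (inf at_top (principal TS))"
    by (rule tendsto_eq_rhs) simp
  show "\<forall>\<^sub>F b in inf at_top (principal TS).
      mux / k * (A - partial_mass (Suc n) b) = delta_integral TS (u_site (int n)) 0 b"
    unfolding eventually_inf_principal by (simp add: delta_integral_u_site)
qed

end

theorem mainTheorem10:
  fixes TS :: "real set" and A k mux :: real and u :: "real \<Rightarrow> real \<Rightarrow> real"
  assumes "time_scale0 TS"
    and "A > 0" and "k > 0" and "mux > 0"
    and TS1: "\<forall>t\<in>TS. 1 - k * graininess TS t / mux > 0"
    and "solves_P TS A k mux u"
  shows "\<forall>n::nat. delta_improper_integral_eq TS (u (real n * mux)) (A * mux / k)
                 \<and> delta_improper_integral_eq TS (u 0) (A * mux / k)"
proof -
  interpret transport_solution TS A k mux u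
    by unfold_locales (use assms in \<open>auto intro: less_imp_le\<close>)
  have "u (real n * mux) = u_site (int n)" for n :: nat
    by (simp add: u_site_def)
  moreover have "u 0 = u_site (int 0)"
    by (simp add: u_site_def)
  ultimately show ?thesis
    using improper_integral_u_site[of 0] improper_integral_u_site by simp
qed

end
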